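(* If $0<\delta < \frac{8}{5} g^{-k-3}k^{-2}$, then for every positive integer $t$, \[ \left|\frac{1}{(2 \pi)^{d}} \int_{R_{\delta}} \Phi(\vec \theta)^t \, \mathrm{d} \vec \theta \right| \leq \exp \left(- \tfrac{11}{192} g^{-k} t \delta^2 \right).\]
   Context: Let $g\ge 2$, $k\ge 2$ be integers, $\mathbb Z_g$ the integers mod $g$, and $d=\binom{k}{2}(g-1)$. Index the coordinates of $\mathbb R^d$ by pairs $(\{i,j\},a)$ with $1\le i<j\le k$ and $a\in\mathbb Z_g\setminus\{0\}$. Define $Z:(\mathbb Z_g)^k\to\mathbb R^d$ by $[Z(\vec x)]_{\{i,j\},a}=1-1/g$ if $x_i-x_j=a$ and $-1/g$ otherwise. Define $\Phi(\vec\theta)=\sum_{\vec x\in(\mathbb Z_g)^k} g^{-k}e^{i\vec\theta\cdot Z(\vec x)}$, $\Lambda=\{\vec\theta\in\mathbb R^d: |\Phi(\vec\theta)|=1\}$, $\Lambda_0=\Lambda\cap[-\pi,\pi)^d$. For $\vec\theta\in[-\pi,\pi)^d$ and $\delta>0$ let $B_\delta(\vec\theta)=\{\vec\mu\in[-\pi,\pi)^d: \vec\mu\equiv\vec\theta+\vec\zeta \pmod{2\pi}$ componentwise, for some $\vec\zeta$ with $|\zeta_{\{i,j\},a}|<\delta$ for all coordinates$\}$, and $R_\delta=[-\pi,\pi)^d\setminus\bigcup_{\vec\theta\in\Lambda_0}B_\delta(\vec\theta)$. *)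

theory Defs
  imports "HOL-Analysis.Analysis"
begin

text \<open>Coordinates of R^d are indexed by ((i,j),a) with 1 <= i < j <= k and
  a in Z_g \ {0}, represented by 1 <= a < g.  Vectors in R^d are extensional
  functions on this index set (as in the product measure PiM).\<close>

definition Idx :: "nat \<Rightarrow> nat \<Rightarrow> ((nat \<times> nat) \<times> nat) set" where
  "Idx g k = {((i,j),a). 1 \<le> i \<and> i < j \<and> j \<le> k \<and> 1 \<le> a \<and> a < g}"

definition Zgk :: "nat \<Rightarrow> nat \<Rightarrow> (nat \<Rightarrow> nat) set" where
  "Zgk g k = PiE {1..k} (\<lambda>_. {0..<g})"

definition Zvec :: "nat \<Rightarrow> (nat \<Rightarrow> nat) \<Rightarrow> ((nat \<times> nat) \<times> nat) \<Rightarrow> real" where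
  "Zvec g x c = (case c of ((i,j),a) \<Rightarrow>
     (if (int (x i) - int (x j)) mod int g = int a then 1 - 1 / real g else - 1 / real g))"

definition Phi :: "nat \<Rightarrow> nat \<Rightarrow> (((nat \<times> nat) \<times> nat) \<Rightarrow> real) \<Rightarrow> complex" where
  "Phi g k \<theta> = (\<Sum>x\<in>Zgk g k. complex_of_real (1 / real g ^ k) *
      exp (\<i> * complex_of_real (\<Sum>c\<in>Idx g k. \<theta> c * Zvec g x c)))"

definition Box :: "nat \<Rightarrow> nat \<Rightarrow> (((nat \<times> nat) \<times> nat) \<Rightarrow> real) set" where
  "Box g k = PiE (Idx g k) (\<lambda>_. {-pi..<pi})"

definition Lambda0 :: "nat \<Rightarrow> nat \<Rightarrow> (((nat \<times> nat) \<times> nat) \<Rightarrow> real) set" where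
  "Lambda0 g k = {\<theta> \<in> Box g k. norm (Phi g k \<theta>) = 1}"

definition Bdelta :: "nat \<Rightarrow> nat \<Rightarrow> real \<Rightarrow> (((nat \<times> nat) \<times> nat) \<Rightarrow> real)
    \<Rightarrow> (((nat \<times> nat) \<times> nat) \<Rightarrow> real) set" where
  "Bdelta g k \<delta> \<theta> = {\<mu> \<in> Box g k. \<exists>\<zeta>. (\<forall>c\<in>Idx g k. \<bar>\<zeta> c\<bar> < \<delta>) \<and>
      (\<forall>c\<in>Idx g k. \<exists>n::int. \<mu> c = \<theta> c + \<zeta> c + 2 * pi * real_of_int n)}"

definition Rdelta :: "nat \<Rightarrow> nat \<Rightarrow> real \<Rightarrow> (((nat \<times> nat) \<times> nat) \<Rightarrow> real) set" where
  "Rdelta g k \<delta> = Box g k - (\<Union>\<theta>\<in>Lambda0 g k. Bdelta g k \<delta> \<theta>)"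

definition dim_d :: "nat \<Rightarrow> nat \<Rightarrow> nat" where
  "dim_d g k = (k choose 2) * (g - 1)"

definition Leb :: "nat \<Rightarrow> nat \<Rightarrow> (((nat \<times> nat) \<times> nat) \<Rightarrow> real) measure" where
  "Leb g k = PiM (Idx g k) (\<lambda>_. lborel)"

end

(*
  Put \<psi>(\<theta>,x) = \<Sum>_c \<theta>_c [x_i - x_j = a]; then |\<Phi>(\<theta>)| = g^-k |\<Sum>_x exp(i \<psi>(\<theta>,x))|, and the
  phases determine \<theta> linearly: for c = ({i,j},a),
    \<Sum>_x ([x_i = a, x_j = 0] - [x_i = 0, x_j = 0]) \<psi>(\<theta>,x) = g^(k-2) \<theta>_c.
  If every phase lies within \<delta>/2 of 2\<pi>\<int>, applying this inversion to the nearest multiples of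
  2\<pi> gives a point within \<delta> of \<theta> whose own phases are, by an integrality argument valid
  for small \<delta>, exactly those multiples; reduced mod 2\<pi> it lies in \<Lambda>_0.  Hence on R_\<delta> some
  phase is at distance at least \<delta>/2 from 2\<pi>\<int>, while the phase of x = 0 vanishes.  These two
  terms alone lose (1 - cos \<psi>)/2 \<ge> 11\<delta>^2/192 against the trivial bound, so
  |\<Phi>| \<le> 1 - 11 g^-k \<delta>^2/192 \<le> exp(-11 g^-k \<delta>^2/192) on R_\<delta>; integrate the t-th power over
  part of a box of volume (2\<pi>)^d.
*)
theory Submission
  imports Defs
begin

lemma cos_le_quartic: "cos (x::real) \<le> 1 - x^2/2 + x^4/24"
proof -
  obtain t where t: "cos x = (\<Sum>m<4. cos_coeff m * x ^ m) + (cos (t + 1/2 * real 4 * pi) / fact 4) * x ^ 4"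
    using Maclaurin_cos_expansion by blast
  have "(\<Sum>m<4. cos_coeff m * x ^ m) = cos_coeff 0 + cos_coeff 1 * x + cos_coeff 2 * x^2 + cos_coeff 3 * x^3"
    by (simp add: numeral_eq_Suc)
  also have "\<dots> = 1 - x^2/2"
    by (simp add: cos_coeff_def fact_numeral)
  moreover have "cos (t + 1/2 * real 4 * pi) / fact 4 * x ^ 4 = cos (t + 1/2 * real 4 * pi) * (x^4/24)"
    by (simp add: fact_numeral)
  moreover have "\<dots> \<le> 1 * (x^4/24)"
    by (rule mult_right_mono) simp_all
  ultimately show ?thesis using t by linarith
qed

lemma one_minus_cos_ge_if_far:
  fixes \<psi> \<delta> :: real
  assumes "0 < \<delta>" "\<delta> \<le> 2" and far: "\<And>n::int. \<delta>/2 \<le> \<bar>\<psi> - 2*pi*n\<bar>"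
  shows "11/96 * \<delta>^2 \<le> 1 - cos \<psi>"
proof -
  define p where "p = \<psi> - 2*pi*round (\<psi> / (2*pi))"
  have "\<bar>\<psi>/(2*pi) - round (\<psi> / (2*pi))\<bar> \<le> 1/2"
    by (rule of_int_round_abs_le[of "\<psi>/(2*pi)", unfolded abs_minus_commute])
  moreover have "p = 2*pi*(\<psi>/(2*pi) - round (\<psi> / (2*pi)))" by (simp add: p_def field_simps)
  ultimately have "\<bar>p\<bar> \<le> pi" by (simp add: abs_mult)
  have "cos \<psi> = cos (p + 2 * pi * round (\<psi> / (2*pi)))" by (simp add: p_def)
  also have "\<dots> = cos \<bar>p\<bar>" by (simp add: cos_add)
  also have "\<dots> \<le> cos (\<delta>/2)"
    using cos_monotone_0_pi_le[of "\<delta>/2" "\<bar>p\<bar>"] far[of "round (\<psi> / (2*pi))"] \<open>\<bar>p\<bar> \<le> pi\<close> assms(1)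
    by (simp add: p_def)
  also have "\<dots> \<le> 1 - (\<delta>/2)^2/2 + (\<delta>/2)^4/24" by (rule cos_le_quartic)
  finally have cos_le: "cos \<psi> \<le> 1 - \<delta>^2/8 + \<delta>^4/384" by (simp add: power_divide)
  have "\<delta>^2 * \<delta>^2 \<le> 4 * \<delta>^2"
    using power_mono[of \<delta> 2 2] assms by (intro mult_right_mono) simp_all
  then have "\<delta>^4 \<le> 4 * \<delta>^2" by (simp flip: power_add)
  then show ?thesis using cos_le by linarith
qed

lemma norm_1_plus_cis_le: "norm (1 + exp (\<i> * complex_of_real p)) \<le> 2 - (1 - cos p)/2"
proof -
  have "exp (\<i> * complex_of_real p) = Complex (cos p) (sin p)"
    by (simp add: exp_Euler complex_eq_iff cos_of_real sin_of_real)
  then have "norm (1 + exp (\<i> * complex_of_real p)) = sqrt ((1 + cos p)^2 + (sin p)^2)"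
    by (simp add: norm_complex_def)
  also have "(1 + cos p)^2 + (sin p)^2 = 2 + 2 * cos p"
    using sin_cos_squared_add[of p] by (simp add: power2_eq_square algebra_simps)
  also have "sqrt (2 + 2 * cos p) \<le> sqrt ((2 - (1 - cos p)/2)^2)"
  proof (rule real_sqrt_le_mono)
    have "(2 - (1 - cos p)/2)^2 = 2 + 2 * cos p + (1 - cos p)^2/4" by (simp add: power2_eq_square field_simps)
    then show "2 + 2 * cos p \<le> (2 - (1 - cos p)/2)^2" by simp
  qed
  also have "\<dots> = 2 - (1 - cos p)/2"
  proof -
    have "0 \<le> cos p + 3" using cos_ge_minus_one[of p] by linarith
    then have "0 \<le> 2 - (1 - cos p)/2" by (simp add: field_simps)
    then show ?thesis by simp
  qed
  finally show ?thesis .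
qed

lemma norm_sum_cis_le:
  fixes \<psi> :: "'a \<Rightarrow> real"
  assumes "finite X" "x0 \<in> X" "x \<in> X" "x \<noteq> x0" "\<psi> x0 = 0"
  shows "norm (\<Sum>y\<in>X. exp (\<i> * complex_of_real (\<psi> y))) \<le> real (card X) - (1 - cos (\<psi> x))/2"
proof -
  define w where "w y = exp (\<i> * complex_of_real (\<psi> y))" for y
  have sub: "{x, x0} \<subseteq> X" using assms by auto
  have "(\<Sum>y\<in>X. w y) = (\<Sum>y\<in>X - {x, x0}. w y) + (\<Sum>y\<in>{x, x0}. w y)"
    by (rule sum.subset_diff[OF sub \<open>finite X\<close>])
  also have "(\<Sum>y\<in>{x, x0}. w y) = 1 + w x" using assms by (simp add: w_def)
  finally have "norm (\<Sum>y\<in>X. w y) \<le> (\<Sum>y\<in>X - {x, x0}. norm (w y)) + norm (1 + w x)"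
    by (metis norm_sum norm_triangle_le add_right_mono)
  also have "(\<Sum>y\<in>X - {x, x0}. norm (w y)) = real (card X) - 2"
    using card_Diff_subset[OF _ sub] card_mono[OF \<open>finite X\<close> sub] assms by (simp add: w_def)
  finally show ?thesis using norm_1_plus_cis_le[of "\<psi> x"] by (simp add: w_def)
qed

lemma exp_i_2pi_int: "exp (\<i> * complex_of_real (2 * pi * real_of_int n)) = 1"
proof -
  have "exp (\<i> * complex_of_real (2 * pi * real_of_int n)) = exp (0 + \<i> * (of_int n * (of_real pi * 2)))"
    by (simp add: algebra_simps)
  also have "\<dots> = 1" by (subst exp_plus_2pin) simp
  finally show ?thesis .
qed

lemma norm_set_integral_le:
  fixes f :: "'a \<Rightarrow> 'b::{banach, second_countable_topology}"
  assumes "A \<subseteq> S" "S \<in> sets M" "emeasure M S = ennreal m" "0 \<le> m" "0 \<le> B"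
    and bound: "\<And>x. x \<in> A \<Longrightarrow> norm (f x) \<le> B"
  shows "norm (set_lebesgue_integral M A f) \<le> B * m"
proof (cases "set_integrable M A f")
  case True
  have "ennreal (norm (set_lebesgue_integral M A f)) \<le> (\<integral>\<^sup>+x. norm (indicator A x *\<^sub>R f x) \<partial>M)"
    using True unfolding set_lebesgue_integral_def set_integrable_def by (rule integral_norm_bound_ennreal)
  also have "\<dots> \<le> (\<integral>\<^sup>+x. ennreal B * indicator S x \<partial>M)"
    using assms(1) bound by (intro nn_integral_mono) (auto simp: indicator_def ennreal_leI)
  also have "\<dots> = ennreal (B * m)"
    using assms(2-5) by (simp add: nn_integral_cmult_indicator ennreal_mult)
  finally show ?thesis using assms(4,5) by (subst (asm) ennreal_le_iff) auto
next
  case False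
  then show ?thesis
    using assms(4,5) by (simp add: set_lebesgue_integral_def set_integrable_def not_integrable_integral_eq)
qed

lemma finite_Idx: "finite (Idx g k)"
proof -
  have "Idx g k \<subseteq> ({1..k} \<times> {1..k}) \<times> {1..<g}" unfolding Idx_def by auto
  then show ?thesis by (rule finite_subset) auto
qed

lemma card_pairs_less: "card {(i, j). 1 \<le> i \<and> i < j \<and> j \<le> (k::nat)} = k choose 2"
proof -
  define P where "P = {(i, j). 1 \<le> i \<and> i < j \<and> j \<le> (k::nat)}"
  define f where "f = (\<lambda>(i::nat, j::nat). {i, j})"
  have "inj_on f P"
  proof (rule inj_onI)
    fix p q assume "p \<in> P" "q \<in> P" "f p = f q"
    then show "p = q"
      unfolding P_def f_def by (auto simp: doubleton_eq_iff)
  qed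
  moreover have "f ` P = {A. A \<subseteq> {1..k} \<and> card A = 2}"
  proof
    show "f ` P \<subseteq> {A. A \<subseteq> {1..k} \<and> card A = 2}" unfolding f_def P_def by auto
    show "{A. A \<subseteq> {1..k} \<and> card A = 2} \<subseteq> f ` P"
    proof
      fix A assume A: "A \<in> {A. A \<subseteq> {1..k} \<and> card A = 2}"
      then obtain x y where xy: "A = {x, y}" "x < y"
        by (auto simp: card_2_iff) (metis insert_commute linorder_neqE_nat)
      then show "A \<in> f ` P" using A unfolding f_def P_def by (auto intro!: image_eqI[of _ _ "(x, y)"])
    qed
  qed
  ultimately have "card P = card {A. A \<subseteq> {1..k} \<and> card A = 2}" by (metis card_image)
  also have "\<dots> = k choose 2" using n_subsets[of "{1..k}" 2] by simp
  finally show ?thesis unfolding P_def .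
qed

lemma card_Idx: "card (Idx g k) = dim_d g k"
proof -
  have eq: "Idx g k = {(i, j). 1 \<le> i \<and> i < j \<and> j \<le> k} \<times> {1..<g}" unfolding Idx_def by auto
  show ?thesis unfolding dim_d_def eq card_cartesian_product card_pairs_less by simp
qed

lemma finite_Zgk: "finite (Zgk g k)"
  by (simp add: Zgk_def finite_PiE)

lemma card_Zgk: "card (Zgk g k) = g ^ k"
  unfolding Zgk_def by (simp add: card_PiE)

lemma mem_Zgk_iff: "x \<in> Zgk g k \<longleftrightarrow> (\<forall>l\<in>{1..k}. x l < g) \<and> (\<forall>l. l \<notin> {1..k} \<longrightarrow> x l = undefined)"
  unfolding Zgk_def PiE_iff extensional_def by auto

section \<open>Shifting a block of coordinates\<close>

definition shift_on :: "nat \<Rightarrow> nat set \<Rightarrow> nat \<Rightarrow> (nat \<Rightarrow> nat) \<Rightarrow> nat \<Rightarrow> nat" where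
  "shift_on g S a x = (\<lambda>l. if l \<in> S then (x l + a) mod g else x l)"

lemma shift_on_in_Zgk: "x \<in> Zgk g k \<Longrightarrow> S \<subseteq> {1..k} \<Longrightarrow> 0 < g \<Longrightarrow> shift_on g S a x \<in> Zgk g k"
  unfolding mem_Zgk_iff shift_on_def by auto

lemma shift_on_shift_on:
  assumes "x \<in> Zgk g k" "S \<subseteq> {1..k}" "(a + b) mod g = 0"
  shows "shift_on g S b (shift_on g S a x) = x"
proof
  fix l
  have "((x l + a) mod g + b) mod g = (x l + (a + b) mod g) mod g"
    by (simp add: mod_add_left_eq mod_add_right_eq add.assoc)
  then show "shift_on g S b (shift_on g S a x) l = x l"
    using assms unfolding shift_on_def mem_Zgk_iff by auto
qed

lemma bij_betw_shift_on:
  assumes "0 < g" "a < g" "S \<subseteq> {1..k}"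
  shows "bij_betw (shift_on g S a) (Zgk g k) (Zgk g k)"
proof (rule bij_betw_byWitness[where f' = "shift_on g S ((g - a) mod g)"])
  have "(a + (g - a) mod g) mod g = 0" "((g - a) mod g + a) mod g = 0"
    using assms by (simp_all add: mod_add_left_eq mod_add_right_eq)
  with assms(3) show "\<forall>x\<in>Zgk g k. shift_on g S ((g - a) mod g) (shift_on g S a x) = x"
    and "\<forall>x\<in>Zgk g k. shift_on g S a (shift_on g S ((g - a) mod g) x) = x"
    by (simp_all add: shift_on_shift_on)
  show "shift_on g S a ` Zgk g k \<subseteq> Zgk g k" "shift_on g S ((g - a) mod g) ` Zgk g k \<subseteq> Zgk g k"
    using assms shift_on_in_Zgk by blast+
qed

section \<open>Phases and their inversion\<close>

definition Zind :: "nat \<Rightarrow> (nat \<Rightarrow> nat) \<Rightarrow> ((nat \<times> nat) \<times> nat) \<Rightarrow> real" where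
  "Zind g x c = (case c of ((i,j),a) \<Rightarrow> if (int (x i) - int (x j)) mod int g = int a then 1 else 0)"

definition phase :: "nat \<Rightarrow> nat \<Rightarrow> (((nat \<times> nat) \<times> nat) \<Rightarrow> real) \<Rightarrow> (nat \<Rightarrow> nat) \<Rightarrow> real" where
  "phase g k \<theta> x = (\<Sum>c\<in>Idx g k. \<theta> c * Zind g x c)"

definition pin :: "nat \<Rightarrow> nat \<Rightarrow> nat \<Rightarrow> (nat \<Rightarrow> nat) \<Rightarrow> real" where
  "pin i j b x = (if x i = b \<and> x j = 0 then 1 else 0)"

definition dual :: "((nat \<times> nat) \<times> nat) \<Rightarrow> (nat \<Rightarrow> nat) \<Rightarrow> real" where
  "dual c x = (case c of ((i,j),a) \<Rightarrow> pin i j a x - pin i j 0 x)"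

lemma Zvec_eq_Zind: "Zvec g x c = Zind g x c - 1 / real g"
  by (cases c) (auto simp: Zvec_def Zind_def)

lemma Zind_Ints: "Zind g x c \<in> \<int>"
  unfolding Zind_def by (auto split: prod.splits)

lemma Zind_bounds: "0 \<le> Zind g x c" "Zind g x c \<le> 1"
  unfolding Zind_def by (auto split: prod.splits)

lemma dual_Ints: "dual c x \<in> \<int>"
  unfolding dual_def pin_def by (auto split: prod.splits)

lemma Zind_shift_on:
  assumes "i \<in> S \<longleftrightarrow> j \<in> S"
  shows "Zind g (shift_on g S b x) ((i,j),a) = Zind g x ((i,j),a)"
proof (cases "i \<in> S")
  case True
  then have "(int (shift_on g S b x i) - int (shift_on g S b x j)) mod int g
      = ((int (x i) + int b) mod int g - (int (x j) + int b) mod int g) mod int g"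
    using assms unfolding shift_on_def by (simp add: of_nat_mod)
  also have "\<dots> = (int (x i) - int (x j)) mod int g" by (simp add: mod_diff_eq)
  finally show ?thesis unfolding Zind_def by simp
next
  case False
  then show ?thesis using assms unfolding Zind_def shift_on_def by simp
qed

lemma pin_shift_on:
  assumes "x \<in> Zgk g k" "i \<in> S" "j \<notin> S" "S \<subseteq> {1..k}" "a < g"
  shows "pin i j a (shift_on g S a x) = pin i j 0 x"
proof -
  have "x i < g" using assms unfolding mem_Zgk_iff by auto
  then have "(x i + a) mod g = a \<longleftrightarrow> x i = 0"
    using \<open>a < g\<close> by (cases "x i + a < g") (auto simp: mod_if)
  then show ?thesis using assms unfolding pin_def shift_on_def by simp
qed

lemma sum_pin:
  assumes "i \<in> {1..k}" "j \<in> {1..k}" "i \<noteq> j" "b < g"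
  shows "(\<Sum>x\<in>Zgk g k. pin i j b x) = real g ^ (k - 2)"
proof -
  define B where "B l = (if l = i then {b} else if l = j then {0} else {0..<g})" for l
  have "(\<Sum>x\<in>Zgk g k. pin i j b x) = real (card {x\<in>Zgk g k. x i = b \<and> x j = 0})"
    unfolding pin_def using sum.inter_filter[OF finite_Zgk, of "\<lambda>_. 1::real"] by (simp add: Int_def)
  also have "{x\<in>Zgk g k. x i = b \<and> x j = 0} = PiE {1..k} B"
    using assms unfolding Zgk_def B_def PiE_iff extensional_def by (auto split: if_splits)
  also have "card (PiE {1..k} B) = (\<Prod>l\<in>{1..k} - {i, j}. card (B l)) * (\<Prod>l\<in>{i, j}. card (B l))"
    unfolding card_PiE[OF finite_atLeastAtMost] using assms by (intro prod.subset_diff) auto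
  also have "(\<Prod>l\<in>{1..k} - {i, j}. card (B l)) = g ^ card ({1..k} - {i, j})"
    by (simp add: B_def)
  also have "card ({1..k} - {i, j}) = k - 2"
    using assms by (subst card_Diff_subset) auto
  finally show ?thesis using assms by (simp add: B_def)
qed

lemma sum_pin_Zind_shift_invariant:
  assumes "0 < g" "a < g" "S \<subseteq> {1..k}" "i \<in> S" "j \<notin> S" "i' \<in> S \<longleftrightarrow> j' \<in> S"
  shows "(\<Sum>x\<in>Zgk g k. pin i j a x * Zind g x ((i',j'),a'))
       = (\<Sum>x\<in>Zgk g k. pin i j 0 x * Zind g x ((i',j'),a'))"
proof -
  have "(\<Sum>x\<in>Zgk g k. pin i j a x * Zind g x ((i',j'),a'))
      = (\<Sum>x\<in>Zgk g k. pin i j a (shift_on g S a x) * Zind g (shift_on g S a x) ((i',j'),a'))"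
    using sum.reindex_bij_betw[OF bij_betw_shift_on[OF assms(1-3)],
        of "\<lambda>x. pin i j a x * Zind g x ((i',j'),a')"] by simp
  also have "\<dots> = (\<Sum>x\<in>Zgk g k. pin i j 0 x * Zind g x ((i',j'),a'))"
    by (rule sum.cong) (use assms pin_shift_on Zind_shift_on in auto)
  finally show ?thesis .
qed

text \<open>If c' and c = ((i,j),a) have different endpoints, adding a to the coordinates of a block S
  that separates i from j but not the endpoints of c' maps the event x i = a, x j = 0 onto
  x i = 0, x j = 0 and leaves Zind x c' unchanged; if they have the same endpoints but c' \<noteq> c,
  both events are incompatible with x i - x j = a'.\<close>

lemma sum_dual_Zind:
  assumes c: "c \<in> Idx g k" and c': "c' \<in> Idx g k"
  shows "(\<Sum>x\<in>Zgk g k. dual c x * Zind g x c') = (if c' = c then real g ^ (k - 2) else 0)"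
proof -
  obtain i j a i' j' a' where eq: "c = ((i,j),a)" "c' = ((i',j'),a')" by (metis prod.collapse)
  have ij: "1 \<le> i" "i < j" "j \<le> k" "1 \<le> a" "a < g" using c eq unfolding Idx_def by auto
  have ij': "1 \<le> i'" "i' < j'" "j' \<le> k" "1 \<le> a'" "a' < g" using c' eq unfolding Idx_def by auto
  have dual_eq: "dual c x = pin i j a x - pin i j 0 x" for x unfolding dual_def eq by simp
  show ?thesis
  proof (cases "c' = c")
    case True
    then have "dual c x * Zind g x c' = pin i j a x" for x
      using ij unfolding dual_eq True unfolding eq pin_def Zind_def by (auto simp: of_nat_mod[symmetric])
    then show ?thesis using True ij by (simp add: sum_pin)
  next
    case False
    have "(\<Sum>x\<in>Zgk g k. pin i j a x * Zind g x c') = (\<Sum>x\<in>Zgk g k. pin i j 0 x * Zind g x c')"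
    proof (cases "i \<notin> {i', j'}")
      case True
      then show ?thesis unfolding eq using ij by (intro sum_pin_Zind_shift_invariant[where S = "{i}"]) auto
    next
      case i_in: False
      show ?thesis
      proof (cases "j \<notin> {i', j'}")
        case True
        then show ?thesis unfolding eq using ij ij' i_in
          by (intro sum_pin_Zind_shift_invariant[where S = "{1..k} - {j}"]) auto
      next
        case False
        then have "i' = i" "j' = j" "a' \<noteq> a" using i_in \<open>c' \<noteq> c\<close> ij ij' eq by auto
        then have "pin i j a x * Zind g x c' = 0" "pin i j 0 x * Zind g x c' = 0" for x
          using ij ij' unfolding pin_def Zind_def eq by (auto simp: of_nat_mod[symmetric])
        then show ?thesis by (simp only: sum.neutral_const)
      qed
    qed
    then show ?thesis using False by (simp add: dual_eq left_diff_distrib sum_subtractf)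
  qed
qed

lemma sum_dual_phase:
  assumes "c \<in> Idx g k"
  shows "(\<Sum>x\<in>Zgk g k. dual c x * phase g k \<theta> x) = real g ^ (k - 2) * \<theta> c"
proof -
  have "(\<Sum>x\<in>Zgk g k. dual c x * phase g k \<theta> x)
      = (\<Sum>c'\<in>Idx g k. \<theta> c' * (\<Sum>x\<in>Zgk g k. dual c x * Zind g x c'))"
    unfolding phase_def
    by (simp add: sum_distrib_left sum_distrib_right mult.assoc mult.left_commute sum.swap[of _ "Zgk g k"])
  also have "\<dots> = (\<Sum>c'\<in>Idx g k. if c' = c then real g ^ (k - 2) * \<theta> c else 0)"
    using assms by (intro sum.cong) (auto simp: sum_dual_Zind)
  finally show ?thesis using assms finite_Idx by simp
qed

lemma abs_sum_dual_le:
  assumes c: "c \<in> Idx g k" and bound: "\<And>x. x \<in> Zgk g k \<Longrightarrow> \<bar>f x\<bar> \<le> \<rho>"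
  shows "\<bar>\<Sum>x\<in>Zgk g k. dual c x * f x\<bar> \<le> 2 * real g ^ (k - 2) * \<rho>"
proof -
  obtain i j a where eq: "c = ((i,j),a)" by (metis prod.collapse)
  have ij: "1 \<le> i" "i < j" "j \<le> k" "1 \<le> a" "a < g" using c eq unfolding Idx_def by auto
  have "\<bar>\<Sum>x\<in>Zgk g k. dual c x * f x\<bar> \<le> (\<Sum>x\<in>Zgk g k. (pin i j a x + pin i j 0 x) * \<rho>)"
  proof (rule order_trans[OF sum_abs sum_mono])
    fix x assume "x \<in> Zgk g k"
    have "\<bar>dual c x\<bar> = pin i j a x + pin i j 0 x"
      using ij unfolding dual_def pin_def eq by auto
    then show "\<bar>dual c x * f x\<bar> \<le> (pin i j a x + pin i j 0 x) * \<rho>"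
      using bound[OF \<open>x \<in> Zgk g k\<close>] by (simp add: abs_mult mult_left_mono)
  qed
  also have "\<dots> = 2 * real g ^ (k - 2) * \<rho>"
    using ij by (simp add: sum_distrib_right[symmetric] sum.distrib sum_pin)
  finally show ?thesis .
qed

lemma abs_sub_dual_lift_le:
  fixes n :: "(nat \<Rightarrow> nat) \<Rightarrow> int"
  assumes "0 < g" and c: "c \<in> Idx g k"
    and near: "\<And>x. x \<in> Zgk g k \<Longrightarrow> \<bar>phase g k \<theta> x - 2 * pi * n x\<bar> \<le> \<rho>"
  shows "\<bar>\<theta> c - 2 * pi * ((\<Sum>x\<in>Zgk g k. dual c x * n x) / real g ^ (k - 2))\<bar> \<le> 2 * \<rho>"
proof -
  define G where "G = real g ^ (k - 2)"
  define m where "m = (\<Sum>x\<in>Zgk g k. dual c x * n x) / G"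
  have "G > 0" using \<open>0 < g\<close> by (simp add: G_def)
  have "G * \<bar>\<theta> c - 2 * pi * m\<bar> = \<bar>(\<Sum>x\<in>Zgk g k. dual c x * phase g k \<theta> x) - 2 * pi * (G * m)\<bar>"
    using sum_dual_phase[OF c, of \<theta>] \<open>G > 0\<close> unfolding G_def[symmetric]
    by (simp add: abs_mult flip: right_diff_distrib mult.left_commute[of G])
  also have "\<dots> = \<bar>\<Sum>x\<in>Zgk g k. dual c x * (phase g k \<theta> x - 2 * pi * n x)\<bar>"
  proof -
    have "G * m = (\<Sum>x\<in>Zgk g k. dual c x * n x)" using \<open>G > 0\<close> by (simp add: m_def)
    then show ?thesis by (simp add: algebra_simps sum_subtractf sum_distrib_left)
  qed
  also have "\<dots> \<le> G * (2 * \<rho>)"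
    using abs_sum_dual_le[of c g k "\<lambda>x. phase g k \<theta> x - 2 * pi * n x" \<rho>] c near
    unfolding G_def by (simp add: algebra_simps)
  finally have "\<bar>\<theta> c - 2 * pi * m\<bar> \<le> 2 * \<rho>" using \<open>G > 0\<close> by (simp add: mult_le_cancel_left_pos)
  then show ?thesis unfolding m_def G_def .
qed

lemma abs_phase_sub_le:
  assumes "\<And>c. c \<in> Idx g k \<Longrightarrow> \<bar>\<theta> c - \<theta>' c\<bar> \<le> \<delta>"
  shows "\<bar>phase g k \<theta> y - phase g k \<theta>' y\<bar> \<le> real (dim_d g k) * \<delta>"
proof -
  have "\<bar>phase g k \<theta> y - phase g k \<theta>' y\<bar> = \<bar>\<Sum>c\<in>Idx g k. Zind g y c * (\<theta> c - \<theta>' c)\<bar>"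
    unfolding phase_def by (simp add: algebra_simps sum_subtractf)
  also have "\<dots> \<le> (\<Sum>c\<in>Idx g k. \<delta>)"
  proof (rule order_trans[OF sum_abs sum_mono])
    fix c assume "c \<in> Idx g k"
    have "\<bar>Zind g y c\<bar> * \<bar>\<theta> c - \<theta>' c\<bar> \<le> 1 * \<delta>"
      using assms[OF \<open>c \<in> Idx g k\<close>] Zind_bounds[of g y c] by (intro mult_mono) auto
    then show "\<bar>Zind g y c * (\<theta> c - \<theta>' c)\<bar> \<le> \<delta>" by (simp add: abs_mult)
  qed
  also have "\<dots> = real (dim_d g k) * \<delta>" by (simp add: card_Idx)
  finally show ?thesis .
qed

lemma norm_Phi_eq:
  "norm (Phi g k \<theta>) = norm (\<Sum>x\<in>Zgk g k. exp (\<i> * complex_of_real (phase g k \<theta> x))) / real g ^ k"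
proof -
  define s where "s = (\<Sum>c\<in>Idx g k. \<theta> c) / real g"
  have "exp (\<i> * complex_of_real (\<Sum>c\<in>Idx g k. \<theta> c * Zvec g x c))
      = exp (\<i> * complex_of_real (- s)) * exp (\<i> * complex_of_real (phase g k \<theta> x))" for x
  proof -
    have "(\<Sum>c\<in>Idx g k. \<theta> c * Zvec g x c) = - s + phase g k \<theta> x"
      unfolding phase_def Zvec_eq_Zind s_def
      by (simp add: right_diff_distrib sum_subtractf sum_divide_distrib)
    then show ?thesis by (simp only: of_real_add distrib_left exp_add)
  qed
  then have Phi_eq: "Phi g k \<theta> = exp (\<i> * complex_of_real (- s)) * complex_of_real (1 / real g ^ k)
      * (\<Sum>x\<in>Zgk g k. exp (\<i> * complex_of_real (phase g k \<theta> x)))"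
    unfolding Phi_def by (simp add: sum_distrib_left mult.assoc mult.left_commute)
  show ?thesis unfolding Phi_eq norm_mult by (simp del: of_real_divide of_real_minus)
qed

lemma norm_Phi_eq_1_if_phases_int:
  assumes "0 < g" and int: "\<And>x. x \<in> Zgk g k \<Longrightarrow> \<exists>n::int. phase g k \<theta> x = 2 * pi * n"
  shows "norm (Phi g k \<theta>) = 1"
proof -
  have "exp (\<i> * complex_of_real (phase g k \<theta> x)) = 1" if "x \<in> Zgk g k" for x
    using int[OF that] exp_i_2pi_int by auto
  then have "(\<Sum>x\<in>Zgk g k. exp (\<i> * complex_of_real (phase g k \<theta> x))) = of_nat (g ^ k)"
    by (simp add: card_Zgk)
  then show ?thesis using assms(1) by (simp add: norm_Phi_eq norm_power)
qed

lemma Lambda0_representative: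
  assumes "0 < g" and int: "\<And>x. x \<in> Zgk g k \<Longrightarrow> \<exists>n::int. phase g k \<mu> x = 2 * pi * n"
  obtains lam q where "lam \<in> Lambda0 g k" "\<And>c. c \<in> Idx g k \<Longrightarrow> \<mu> c = lam c + 2 * pi * of_int (q c)"
proof
  define q where "q c = \<lfloor>\<mu> c / (2*pi) + 1/2\<rfloor>" for c
  define lam where "lam c = (if c \<in> Idx g k then \<mu> c - 2*pi*q c else undefined)" for c
  show "\<mu> c = lam c + 2 * pi * of_int (q c)" if "c \<in> Idx g k" for c
    using that by (simp add: lam_def)
  have "lam c \<in> {-pi..<pi}" if "c \<in> Idx g k" for c
  proof -
    have "q c \<le> \<mu> c / (2*pi) + 1/2" "\<mu> c / (2*pi) + 1/2 < q c + 1" unfolding q_def by linarith+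
    then have "-pi \<le> \<mu> c - 2*pi*q c" "\<mu> c - 2*pi*q c < pi" by (simp_all add: field_simps)
    then show ?thesis using that by (simp add: lam_def)
  qed
  then have "lam \<in> Box g k" unfolding Box_def by (auto simp: lam_def)
  moreover have "\<exists>n::int. phase g k lam x = 2 * pi * n" if x: "x \<in> Zgk g k" for x
  proof -
    obtain n :: int where n: "phase g k \<mu> x = 2 * pi * n" using int[OF x] by blast
    have "(\<Sum>c\<in>Idx g k. Zind g x c * q c) \<in> \<int>" by (intro Ints_sum Ints_mult Zind_Ints) auto
    then obtain z where z: "(\<Sum>c\<in>Idx g k. Zind g x c * q c) = of_int z" by (metis Ints_cases)
    have "phase g k lam x = phase g k \<mu> x - 2 * pi * (\<Sum>c\<in>Idx g k. Zind g x c * q c)"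
      unfolding phase_def by (simp add: lam_def algebra_simps sum_subtractf sum_distrib_left)
    then show ?thesis unfolding n z by (intro exI[of _ "n - z"]) (simp add: algebra_simps)
  qed
  ultimately show "lam \<in> Lambda0 g k"
    unfolding Lambda0_def using norm_Phi_eq_1_if_phases_int[OF \<open>0 < g\<close>] by blast
qed

text \<open>The integrality step: the phase of 2 pi m at y lies within 2 pi / g^(k-2) of 2 pi n and,
  by integrality of g^(k-2) m, is a multiple of 2 pi / g^(k-2); hence it equals 2 pi n.\<close>

lemma phase_lift_eq_if_close:
  fixes n :: int
  assumes "0 < g"
    and m_int: "\<And>c. c \<in> Idx g k \<Longrightarrow> real g ^ (k - 2) * m c \<in> \<int>"
    and close: "\<And>c. c \<in> Idx g k \<Longrightarrow> \<bar>\<theta> c - 2 * pi * m c\<bar> < \<delta>"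
    and near: "\<bar>phase g k \<theta> y - 2 * pi * n\<bar> < \<delta> / 2"
    and small: "(real (dim_d g k) + 1/2) * \<delta> * real g ^ (k - 2) < 2 * pi"
  shows "phase g k (\<lambda>c. 2 * pi * m c) y = 2 * pi * n"
proof -
  define G where "G = real g ^ (k - 2)"
  define V where "V = (\<Sum>c\<in>Idx g k. Zind g y c * m c)"
  have "G > 0" using \<open>0 < g\<close> by (simp add: G_def)
  have phase_V: "phase g k (\<lambda>c. 2 * pi * m c) y = 2 * pi * V"
    unfolding phase_def V_def by (simp add: sum_distrib_left mult_ac)
  then have far_V: "\<bar>phase g k \<theta> y - 2 * pi * V\<bar> \<le> real (dim_d g k) * \<delta>"
    using abs_phase_sub_le[of g k \<theta> "\<lambda>c. 2 * pi * m c" \<delta> y] close by (simp add: less_imp_le)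
  have "2 * pi * \<bar>V - n\<bar> = \<bar>(phase g k \<theta> y - 2 * pi * n) - (phase g k \<theta> y - 2 * pi * V)\<bar>"
  proof -
    have "(phase g k \<theta> y - 2 * pi * n) - (phase g k \<theta> y - 2 * pi * V) = 2 * pi * (V - n)"
      by (simp add: algebra_simps)
    then show ?thesis by (simp add: abs_mult)
  qed
  also have "\<dots> < (real (dim_d g k) + 1/2) * \<delta>"
    using abs_triangle_ineq4[of "phase g k \<theta> y - 2 * pi * n" "phase g k \<theta> y - 2 * pi * V"] near far_V
    by (simp add: algebra_simps)
  finally have "G * (2 * pi * \<bar>V - n\<bar>) < G * ((real (dim_d g k) + 1/2) * \<delta>)"
    using \<open>G > 0\<close> by (rule mult_strict_left_mono)
  also have "\<dots> < 2 * pi" using small unfolding G_def by (simp add: mult.commute)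
  finally have "\<bar>G * V - G * n\<bar> < 1"
    using \<open>G > 0\<close> by (simp add: abs_mult right_diff_distrib[symmetric] mult.left_commute)
  moreover have "G * V \<in> \<int>"
  proof -
    have "G * V = (\<Sum>c\<in>Idx g k. Zind g y c * (G * m c))"
      unfolding V_def by (simp add: sum_distrib_left mult.left_commute)
    also have "\<dots> \<in> \<int>" unfolding G_def by (intro Ints_sum Ints_mult[OF Zind_Ints] m_int)
    finally show ?thesis .
  qed
  moreover have "G * n \<in> \<int>" unfolding G_def by simp
  ultimately have "G * V = G * n" using Ints_eq_abs_less1 by blast
  then show ?thesis using \<open>G > 0\<close> phase_V by simp
qed

section \<open>The bound away from \<open>\<Lambda>\<close>\<close>

lemma near_Lambda0_if_phases_near:
  assumes "2 \<le> g" "\<theta> \<in> Box g k"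
    and small: "(real (dim_d g k) + 1/2) * \<delta> * real g ^ (k - 2) < 2 * pi"
    and near: "\<And>x. x \<in> Zgk g k \<Longrightarrow> \<exists>n::int. \<bar>phase g k \<theta> x - 2 * pi * n\<bar> < \<delta> / 2"
  shows "\<exists>lam\<in>Lambda0 g k. \<theta> \<in> Bdelta g k \<delta> lam"
proof -
  obtain n :: "(nat \<Rightarrow> nat) \<Rightarrow> int" where n: "\<And>x. x \<in> Zgk g k \<Longrightarrow> \<bar>phase g k \<theta> x - 2 * pi * n x\<bar> < \<delta> / 2"
    using near by metis
  define \<rho> where "\<rho> = Max ((\<lambda>x. \<bar>phase g k \<theta> x - 2 * pi * n x\<bar>) ` Zgk g k)"
  have "Zgk g k \<noteq> {}" using card_Zgk[of g k] \<open>2 \<le> g\<close> by auto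
  then have "\<rho> \<in> (\<lambda>x. \<bar>phase g k \<theta> x - 2 * pi * n x\<bar>) ` Zgk g k"
    unfolding \<rho>_def by (intro Max_in) (auto simp: finite_Zgk)
  then have "\<rho> < \<delta> / 2" using n by auto
  have \<rho>_ge: "\<bar>phase g k \<theta> x - 2 * pi * n x\<bar> \<le> \<rho>" if "x \<in> Zgk g k" for x
    unfolding \<rho>_def using that by (intro Max_ge) (auto simp: finite_Zgk)
  define G where "G = real g ^ (k - 2)"
  define m where "m c = (\<Sum>x\<in>Zgk g k. dual c x * n x) / G" for c
  have close: "\<bar>\<theta> c - 2 * pi * m c\<bar> < \<delta>" if "c \<in> Idx g k" for c
    using abs_sub_dual_lift_le[of g c k \<theta> n \<rho>] \<open>2 \<le> g\<close> that \<rho>_ge \<open>\<rho> < \<delta> / 2\<close>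
    unfolding m_def G_def by fastforce
  have "G * m c \<in> \<int>" for c
    using \<open>2 \<le> g\<close> unfolding m_def G_def by (auto intro!: Ints_sum Ints_mult dual_Ints)
  then have "phase g k (\<lambda>c. 2 * pi * m c) y = 2 * pi * n y" if "y \<in> Zgk g k" for y
    using \<open>2 \<le> g\<close> close n[OF that] small unfolding G_def by (intro phase_lift_eq_if_close) auto
  then have "\<exists>n'::int. phase g k (\<lambda>c. 2 * pi * m c) y = 2 * pi * n'" if "y \<in> Zgk g k" for y
    using that by blast
  then obtain lam q where "lam \<in> Lambda0 g k"
    and lam: "\<And>c. c \<in> Idx g k \<Longrightarrow> 2 * pi * m c = lam c + 2 * pi * of_int (q c)"
    using Lambda0_representative[of g k "\<lambda>c. 2 * pi * m c"] \<open>2 \<le> g\<close> by auto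
  have "\<theta> \<in> Bdelta g k \<delta> lam"
    unfolding Bdelta_def
  proof (intro CollectI conjI exI[of _ "\<lambda>c. \<theta> c - 2 * pi * m c"] ballI)
    fix c assume "c \<in> Idx g k"
    show "\<exists>n::int. \<theta> c = lam c + (\<theta> c - 2 * pi * m c) + 2 * pi * n"
      using lam[OF \<open>c \<in> Idx g k\<close>] by (intro exI[of _ "q c"]) simp
  qed (use \<open>\<theta> \<in> Box g k\<close> close in auto)
  then show ?thesis using \<open>lam \<in> Lambda0 g k\<close> by blast
qed

lemma norm_Phi_le_on_Rdelta:
  assumes "2 \<le> g" "0 < \<delta>" "\<delta> \<le> 2"
    and small: "(real (dim_d g k) + 1/2) * \<delta> * real g ^ (k - 2) < 2 * pi"
    and "\<theta> \<in> Rdelta g k \<delta>"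
  shows "norm (Phi g k \<theta>) \<le> exp (- (11/192) * (1 / real g ^ k) * \<delta>^2)"
proof -
  have "\<not> (\<forall>x\<in>Zgk g k. \<exists>n::int. \<bar>phase g k \<theta> x - 2 * pi * n\<bar> < \<delta> / 2)"
    using near_Lambda0_if_phases_near[OF \<open>2 \<le> g\<close> _ small] \<open>\<theta> \<in> Rdelta g k \<delta>\<close>
    unfolding Rdelta_def by blast
  then obtain x where x: "x \<in> Zgk g k" and far: "\<And>n::int. \<delta> / 2 \<le> \<bar>phase g k \<theta> x - 2 * pi * n\<bar>"
    by (auto simp: not_less)
  define x0 :: "nat \<Rightarrow> nat" where "x0 l = (if l \<in> {1..k} then 0 else undefined)" for l
  have "x0 \<in> Zgk g k" using \<open>2 \<le> g\<close> unfolding mem_Zgk_iff x0_def by auto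
  moreover have "phase g k \<theta> x0 = 0"
    unfolding phase_def by (intro sum.neutral) (auto simp: Zind_def Idx_def x0_def)
  moreover have "x \<noteq> x0" using far[of 0] \<open>0 < \<delta>\<close> calculation(2) by auto
  ultimately have "norm (\<Sum>y\<in>Zgk g k. exp (\<i> * complex_of_real (phase g k \<theta> y)))
      \<le> real g ^ k - (1 - cos (phase g k \<theta> x)) / 2"
    using norm_sum_cis_le[OF finite_Zgk _ x] by (simp add: card_Zgk)
  also have "\<dots> \<le> real g ^ k - 11/192 * \<delta>^2"
    using one_minus_cos_ge_if_far[OF \<open>0 < \<delta>\<close> \<open>\<delta> \<le> 2\<close> far] by simp
  finally have "norm (Phi g k \<theta>) \<le> 1 + (- (11/192) * (1 / real g ^ k) * \<delta>^2)"
    using \<open>2 \<le> g\<close> by (simp add: norm_Phi_eq divide_right_mono field_simps)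
  also have "\<dots> \<le> exp (- (11/192) * (1 / real g ^ k) * \<delta>^2)" by (rule exp_ge_add_one_self)
  finally show ?thesis .
qed

lemma emeasure_Box: "emeasure (Leb g k) (Box g k) = ennreal ((2 * pi) ^ dim_d g k)"
proof -
  interpret product_sigma_finite "\<lambda>_. lborel :: real measure" by standard
  have "emeasure (Leb g k) (Box g k) = (\<Prod>c\<in>Idx g k. emeasure lborel {-pi..<pi})"
    unfolding Leb_def Box_def by (rule emeasure_PiM) (auto simp: finite_Idx)
  also have "\<dots> = ennreal ((2 * pi) ^ card (Idx g k))" by (simp add: ennreal_power)
  finally show ?thesis by (simp add: card_Idx)
qed

lemma sets_Box: "Box g k \<in> sets (Leb g k)"
  unfolding Leb_def Box_def by (rule sets_PiM_I_finite) (auto simp: finite_Idx)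

lemma admissible_delta:
  fixes \<delta> :: real
  assumes "2 \<le> g" "2 \<le> k" "0 < \<delta>" "\<delta> < 8 / 5 * (1 / real g ^ (k + 3)) * (1 / real k ^ 2)"
  shows "\<delta> \<le> 2" and "(real (dim_d g k) + 1/2) * \<delta> * real g ^ (k - 2) < 2 * pi"
proof -
  have "1 \<le> real g ^ (k + 3) * real k ^ 2"
    using assms(1,2) by (simp add: mult_ge1_I)
  moreover have \<delta>_small: "\<delta> * (real g ^ (k + 3) * real k ^ 2) < 8 / 5"
  proof -
    have "\<delta> * (real g ^ (k + 3) * real k ^ 2)
        < 8 / 5 * (1 / real g ^ (k + 3)) * (1 / real k ^ 2) * (real g ^ (k + 3) * real k ^ 2)"
      using assms(4) calculation by (intro mult_strict_right_mono) auto
    also have "\<dots> = 8 / 5" using assms(1,2) by simp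
    finally show ?thesis .
  qed
  ultimately show "\<delta> \<le> 2"
    using mult_left_mono[of 1 "real g ^ (k + 3) * real k ^ 2" \<delta>] assms(3) by linarith
  have "dim_d g k \<le> k ^ 2 * (g - 1)"
    unfolding dim_d_def using binomial_le_pow[OF assms(2)] by (rule mult_le_mono1)
  then have "real (dim_d g k) \<le> real (k ^ 2 * (g - 1))" by (rule of_nat_mono)
  also have "\<dots> = real k ^ 2 * real g - real k ^ 2" using assms(1) by (simp add: of_nat_diff algebra_simps)
  finally have "real (dim_d g k) \<le> real k ^ 2 * real g - real k ^ 2" .
  moreover have "1 \<le> real k ^ 2" using assms(2) by simp
  ultimately have d_le: "real (dim_d g k) + 1/2 \<le> real k ^ 2 * real g" by linarith
  have "real g * real g ^ (k - 2) = real g ^ Suc (k - 2)" by simp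
  also have "\<dots> \<le> real g ^ (k + 3)" using assms(1) by (intro power_increasing) auto
  finally have g_pow: "real g * real g ^ (k - 2) \<le> real g ^ (k + 3)" .
  have "(real (dim_d g k) + 1/2) * \<delta> * real g ^ (k - 2) \<le> (real k ^ 2 * real g) * \<delta> * real g ^ (k - 2)"
    using d_le assms(3) by (intro mult_right_mono) auto
  also have "\<dots> = \<delta> * real k ^ 2 * (real g * real g ^ (k - 2))" by (simp add: algebra_simps)
  also have "\<dots> \<le> \<delta> * real k ^ 2 * real g ^ (k + 3)"
    using g_pow assms(3) by (intro mult_left_mono) auto
  also have "\<dots> < 2 * pi" using \<delta>_small pi_gt3 by (simp add: algebra_simps)
  finally show "(real (dim_d g k) + 1/2) * \<delta> * real g ^ (k - 2) < 2 * pi" .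
qed

theorem proposition3p3:
  fixes g k t :: nat and \<delta> :: real
  assumes "g \<ge> 2" and "k \<ge> 2"
    and "0 < \<delta>"
    and "\<delta> < 8 / 5 * (1 / real g ^ (k + 3)) * (1 / real k ^ 2)"
    and "t > 0"
  shows "norm (complex_of_real (1 / (2 * pi) ^ dim_d g k) *
           set_lebesgue_integral (Leb g k) (Rdelta g k \<delta>) (\<lambda>\<theta>. Phi g k \<theta> ^ t))
         \<le> exp (- (11 / 192) * (1 / real g ^ k) * real t * \<delta>\<^sup>2)"
proof -
  define b where "b = exp (- (11 / 192) * (1 / real g ^ k) * \<delta>\<^sup>2)"
  have "norm (Phi g k \<theta> ^ t) \<le> b ^ t" if "\<theta> \<in> Rdelta g k \<delta>" for \<theta>
    using norm_Phi_le_on_Rdelta[OF assms(1,3) admissible_delta[OF assms(1-4)] that]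
    unfolding b_def norm_power by (intro power_mono) auto
  then have "norm (set_lebesgue_integral (Leb g k) (Rdelta g k \<delta>) (\<lambda>\<theta>. Phi g k \<theta> ^ t))
      \<le> b ^ t * (2 * pi) ^ dim_d g k"
    by (intro norm_set_integral_le[OF _ sets_Box emeasure_Box]) (auto simp: Rdelta_def b_def)
  moreover have "\<bar>1 / (2 * pi) ^ dim_d g k\<bar> = 1 / (2 * pi) ^ dim_d g k" by simp
  ultimately have "norm (complex_of_real (1 / (2 * pi) ^ dim_d g k) *
           set_lebesgue_integral (Leb g k) (Rdelta g k \<delta>) (\<lambda>\<theta>. Phi g k \<theta> ^ t))
      \<le> 1 / (2 * pi) ^ dim_d g k * (b ^ t * (2 * pi) ^ dim_d g k)"
    unfolding norm_mult norm_of_real by (simp only:) (intro mult_left_mono, auto)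
  also have "\<dots> = b ^ t" by simp
  also have "b ^ t = exp (- (11 / 192) * (1 / real g ^ k) * real t * \<delta>\<^sup>2)"
    unfolding b_def by (simp add: exp_of_nat_mult[symmetric] algebra_simps)
  finally show ?thesis .
qed

end
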